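(* Let $\chi\in M_{\mathbb{R}}$ with $r(\chi)=r$, and let $\lambda$ be a cocharacter of $SG(d)$ with $\chi\in F_r(\lambda)$. Then there exist $c\in\mathbb{R}$ and coefficients $c_\beta$ for $\beta\in\mathcal{W}$ with \[c_\beta=0 \text{ if } \langle\lambda,\beta\rangle<0,\qquad c_\beta=-r \text{ if } \langle\lambda,\beta\rangle>0,\qquad c_\beta\in[-r,0]\text{ if }\langle\lambda,\beta\rangle=0,\] such that $\chi=\sum_{\beta\in\mathcal{W}}c_\beta\beta+c\tau_d$. Conversely, every $\chi\in r\mathbb{W}$ of this form lies on $F_r(\lambda)$. Consequently, if $\mu$ is a cocharacter of $SG(d)$ with $F_r(\mu)\subset F_r(\lambda)$, then $\mu\ge\lambda$. Moreover, if $\chi\in F_r(\lambda)^{\mathrm{int}}$, then the coefficients $c_\beta$ with $\langle\lambda,\beta\rangle=0$ can be chosen in $(-r,0]$.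
   Context: Let $Q=(I,E)$ be a symmetric quiver (for all $i,j\in I$ the number of arrows $i\to j$ equals the number of arrows $j\to i$), with source and target maps $s,t$. Fix $d\in\mathbb{N}^I$ and let $R(d)=\bigoplus_{a\in E}\mathrm{Hom}(\mathbb{C}^{d_{s(a)}},\mathbb{C}^{d_{t(a)}})$ with $G(d)=\prod_i GL(d_i)$ acting by conjugation. Standing assumption: the subquiver of $Q$ on the vertices $i$ with $d_i\neq0$ is connected and is not the quiver with one vertex and no arrows. Let $M=\bigoplus_{i\in I,1\le j\le d_i}\mathbb{Z}\beta^i_j$ be the weight lattice of the diagonal torus $T(d)$, $M_{\mathbb{R}}=M\otimes\mathbb{R}$, $N$ the dual (coweight) lattice, $\langle\,,\rangle$ the pairing. Let $\mathcal{W}$ be the multiset of $T(d)$-weights of $R(d)$ (for each arrow $a:i\to j$ and $x\le d_i$, $y\le d_j$, the weight $\beta^j_y-\beta^i_x$). Let $\tau_d=(\sum_{i,j}\beta^i_j)/(\sum_i d_i)$ and $\mathbb{W}=\sum_{\beta\in\mathcal{W}}[0,\beta]+\mathbb{R}\tau_d\subset M_{\mathbb{R}}$ (Minkowski sum). For $\chi\in M_{\mathbb{R}}$, $r(\chi)$ is the smallest $r\ge0$ with $\chi\in r\mathbb{W}$. A cocharacter of $SG(d)$ (the kernel of the product of determinants) means here an element $\lambda\in N$ with $\langle\lambda,\sum_{i,j}\beta^i_j\rangle=0$. Set $N^{\lambda>0}:=\sum_{\beta\in\mathcal{W},\,\langle\lambda,\beta\rangle>0}\beta$. For $r\ge0$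 let $H_r(\lambda)=\{\psi\in M_{\mathbb{R}}:\langle\lambda,\psi\rangle+r\langle\lambda,N^{\lambda>0}\rangle=0\}$ and $F_r(\lambda)=H_r(\lambda)\cap r\mathbb{W}$. Write $\mu\ge\lambda$ if every $\beta\in\mathcal{W}$ with $\langle\lambda,\beta\rangle>0$ satisfies $\langle\mu,\beta\rangle>0$, and $\mu>\lambda$ if $\mu\ge\lambda$ but not $\lambda\ge\mu$. Let $F_r(\lambda)^{\mathrm{int}}:=F_r(\lambda)\setminus\bigcup_{\mu>\lambda}F_r(\mu)$. *)

theory Defs
  imports Complex_Main
begin

text \<open>Quiver data: vertex set I, arrow set E, source/target maps s t, dimension vector d.
  Coordinates of M_R: index set B = {(i,j). i in I, 1 <= j <= d i}; a vector of M_R is a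
  function ('v * nat) => real vanishing outside B.\<close>

definition symmetric_quiver :: "'v set \<Rightarrow> 'e set \<Rightarrow> ('e \<Rightarrow> 'v) \<Rightarrow> ('e \<Rightarrow> 'v) \<Rightarrow> bool" where
  "symmetric_quiver I E s t \<longleftrightarrow>
     (\<forall>i\<in>I. \<forall>j\<in>I. card {a\<in>E. s a = i \<and> t a = j} = card {a\<in>E. s a = j \<and> t a = i})"

definition supp_dim :: "'v set \<Rightarrow> ('v \<Rightarrow> nat) \<Rightarrow> 'v set" where
  "supp_dim I d = {i\<in>I. d i \<noteq> 0}"

definition standing_assumption ::
  "'v set \<Rightarrow> 'e set \<Rightarrow> ('e \<Rightarrow> 'v) \<Rightarrow> ('e \<Rightarrow> 'v) \<Rightarrow> ('v \<Rightarrow> nat) \<Rightarrow> bool" where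
  "standing_assumption I E s t d \<longleftrightarrow>
     (let S = supp_dim I d;
          ES = {a\<in>E. s a \<in> S \<and> t a \<in> S};
          R = {(s a, t a) | a. a \<in> ES} \<union> {(t a, s a) | a. a \<in> ES}
      in S \<noteq> {} \<and> (\<forall>i\<in>S. \<forall>j\<in>S. (i, j) \<in> R\<^sup>*) \<and> \<not> (card S = 1 \<and> ES = {}))"

definition Bidx :: "'v set \<Rightarrow> ('v \<Rightarrow> nat) \<Rightarrow> ('v \<times> nat) set" where
  "Bidx I d = {(i, j). i \<in> I \<and> 1 \<le> j \<and> j \<le> d i}"

definition MR :: "'v set \<Rightarrow> ('v \<Rightarrow> nat) \<Rightarrow> (('v \<times> nat) \<Rightarrow> real) set" where
  "MR I d = {\<chi>. \<forall>b. b \<notin> Bidx I d \<longrightarrow> \<chi> b = 0}"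

definition pairing :: "'v set \<Rightarrow> ('v \<Rightarrow> nat) \<Rightarrow> (('v \<times> nat) \<Rightarrow> int) \<Rightarrow> (('v \<times> nat) \<Rightarrow> real) \<Rightarrow> real" where
  "pairing I d lam \<psi> = (\<Sum>b\<in>Bidx I d. real_of_int (lam b) * \<psi> b)"

text \<open>Cocharacters of SG(d): coweights supported on B with sum of coordinates 0.\<close>
definition cochar :: "'v set \<Rightarrow> ('v \<Rightarrow> nat) \<Rightarrow> (('v \<times> nat) \<Rightarrow> int) \<Rightarrow> bool" where
  "cochar I d lam \<longleftrightarrow> (\<forall>b. b \<notin> Bidx I d \<longrightarrow> lam b = 0) \<and> (\<Sum>b\<in>Bidx I d. lam b) = 0"

text \<open>Index set of the multiset of weights: triples (a, x, y).\<close>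
definition Widx :: "'e set \<Rightarrow> ('e \<Rightarrow> 'v) \<Rightarrow> ('e \<Rightarrow> 'v) \<Rightarrow> ('v \<Rightarrow> nat) \<Rightarrow> ('e \<times> nat \<times> nat) set" where
  "Widx E s t d = {(a, x, y). a \<in> E \<and> 1 \<le> x \<and> x \<le> d (s a) \<and> 1 \<le> y \<and> y \<le> d (t a)}"

definition wt :: "('e \<Rightarrow> 'v) \<Rightarrow> ('e \<Rightarrow> 'v) \<Rightarrow> ('e \<times> nat \<times> nat) \<Rightarrow> ('v \<times> nat) \<Rightarrow> real" where
  "wt s t w = (case w of (a, x, y) \<Rightarrow>
      (\<lambda>b. (if b = (t a, y) then 1 else 0) - (if b = (s a, x) then 1 else 0)))"

definition tau :: "'v set \<Rightarrow> ('v \<Rightarrow> nat) \<Rightarrow> ('v \<times> nat) \<Rightarrow> real" where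
  "tau I d = (\<lambda>b. if b \<in> Bidx I d then 1 / real (card (Bidx I d)) else 0)"

text \<open>r W = sum over weights of [0, r beta] + R tau (for r > 0 this is the dilate of W).\<close>
definition rW :: "'v set \<Rightarrow> 'e set \<Rightarrow> ('e \<Rightarrow> 'v) \<Rightarrow> ('e \<Rightarrow> 'v) \<Rightarrow> ('v \<Rightarrow> nat) \<Rightarrow> real
     \<Rightarrow> (('v \<times> nat) \<Rightarrow> real) set" where
  "rW I E s t d r = {\<psi>. \<exists>tc c. (\<forall>w\<in>Widx E s t d. 0 \<le> tc w \<and> tc w \<le> r) \<and>
        \<psi> = (\<lambda>b. (\<Sum>w\<in>Widx E s t d. tc w * wt s t w b) + c * tau I d b)}"

definition rfun :: "'v set \<Rightarrow> 'e set \<Rightarrow> ('e \<Rightarrow> 'v) \<Rightarrow> ('e \<Rightarrow> 'v) \<Rightarrow> ('v \<Rightarrow> nat)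
     \<Rightarrow> (('v \<times> nat) \<Rightarrow> real) \<Rightarrow> real" where
  "rfun I E s t d \<chi> = Inf {r. 0 \<le> r \<and> \<chi> \<in> rW I E s t d r}"

definition Npos :: "'v set \<Rightarrow> 'e set \<Rightarrow> ('e \<Rightarrow> 'v) \<Rightarrow> ('e \<Rightarrow> 'v) \<Rightarrow> ('v \<Rightarrow> nat)
     \<Rightarrow> (('v \<times> nat) \<Rightarrow> int) \<Rightarrow> ('v \<times> nat) \<Rightarrow> real" where
  "Npos I E s t d lam = (\<lambda>b. \<Sum>w\<in>{w\<in>Widx E s t d. pairing I d lam (wt s t w) > 0}. wt s t w b)"

definition Hr :: "'v set \<Rightarrow> 'e set \<Rightarrow> ('e \<Rightarrow> 'v) \<Rightarrow> ('e \<Rightarrow> 'v) \<Rightarrow> ('v \<Rightarrow> nat) \<Rightarrow> real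
     \<Rightarrow> (('v \<times> nat) \<Rightarrow> int) \<Rightarrow> (('v \<times> nat) \<Rightarrow> real) set" where
  "Hr I E s t d r lam = {\<psi>. pairing I d lam \<psi> + r * pairing I d lam (Npos I E s t d lam) = 0}"

definition Fr :: "'v set \<Rightarrow> 'e set \<Rightarrow> ('e \<Rightarrow> 'v) \<Rightarrow> ('e \<Rightarrow> 'v) \<Rightarrow> ('v \<Rightarrow> nat) \<Rightarrow> real
     \<Rightarrow> (('v \<times> nat) \<Rightarrow> int) \<Rightarrow> (('v \<times> nat) \<Rightarrow> real) set" where
  "Fr I E s t d r lam = Hr I E s t d r lam \<inter> rW I E s t d r"

definition cgeq :: "'v set \<Rightarrow> 'e set \<Rightarrow> ('e \<Rightarrow> 'v) \<Rightarrow> ('e \<Rightarrow> 'v) \<Rightarrow> ('v \<Rightarrow> nat)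
     \<Rightarrow> (('v \<times> nat) \<Rightarrow> int) \<Rightarrow> (('v \<times> nat) \<Rightarrow> int) \<Rightarrow> bool" where
  "cgeq I E s t d mu lam \<longleftrightarrow>
     (\<forall>w\<in>Widx E s t d. pairing I d lam (wt s t w) > 0 \<longrightarrow> pairing I d mu (wt s t w) > 0)"

definition cgt :: "'v set \<Rightarrow> 'e set \<Rightarrow> ('e \<Rightarrow> 'v) \<Rightarrow> ('e \<Rightarrow> 'v) \<Rightarrow> ('v \<Rightarrow> nat)
     \<Rightarrow> (('v \<times> nat) \<Rightarrow> int) \<Rightarrow> (('v \<times> nat) \<Rightarrow> int) \<Rightarrow> bool" where
  "cgt I E s t d mu lam \<longleftrightarrow> cgeq I E s t d mu lam \<and> \<not> cgeq I E s t d lam mu"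

definition Fint :: "'v set \<Rightarrow> 'e set \<Rightarrow> ('e \<Rightarrow> 'v) \<Rightarrow> ('e \<Rightarrow> 'v) \<Rightarrow> ('v \<Rightarrow> nat) \<Rightarrow> real
     \<Rightarrow> (('v \<times> nat) \<Rightarrow> int) \<Rightarrow> (('v \<times> nat) \<Rightarrow> real) set" where
  "Fint I E s t d r lam = Fr I E s t d r lam -
     (\<Union>mu\<in>{mu. cochar I d mu \<and> cgt I E s t d mu lam}. Fr I E s t d r mu)"

definition decomp :: "'v set \<Rightarrow> 'e set \<Rightarrow> ('e \<Rightarrow> 'v) \<Rightarrow> ('e \<Rightarrow> 'v) \<Rightarrow> ('v \<Rightarrow> nat) \<Rightarrow> real
     \<Rightarrow> real set \<Rightarrow> (('v \<times> nat) \<Rightarrow> int) \<Rightarrow> (('v \<times> nat) \<Rightarrow> real) \<Rightarrow> bool" where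
  "decomp I E s t d r Z lam \<chi> \<longleftrightarrow>
     (\<exists>c cb. (\<forall>w\<in>Widx E s t d.
                 (pairing I d lam (wt s t w) < 0 \<longrightarrow> cb w = 0) \<and>
                 (pairing I d lam (wt s t w) > 0 \<longrightarrow> cb w = - r) \<and>
                 (pairing I d lam (wt s t w) = 0 \<longrightarrow> cb w \<in> Z)) \<and>
             \<chi> = (\<lambda>b. (\<Sum>w\<in>Widx E s t d. cb w * wt s t w b) + c * tau I d b))"

end

theory Submission
  imports Defs
begin

(* Since the quiver is symmetric, every weight beta comes with -beta, so r W consists of the
   sums  sum c_beta beta + c tau  with all c_beta in [-r, 0]. Pairing such a sum with lambda, the
   equation of H_r(lambda) becomes a sum of nonnegative terms, (c_beta + r) <lambda, beta> for
   lambda-positive and c_beta <lambda, beta> for lambda-negative beta, so it holds exactly when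
   these coefficients take the extreme values; this gives the decomposition, its converse, and
   the comparison mu >= lambda (test with the point having coefficient -r/2 on mu-neutral weights).
   For the interior, take a decomposition with the fewest lambda-neutral weights at coefficient -r
   and view the weights beta^h - beta^t as edges of a graph on the coordinates. If such an edge
   lies on a cycle of the residual graph (edges whose coefficient can still move), shifting the
   coefficients around the cycle keeps the sum and frees that edge. Otherwise the set U of
   coordinates reachable from its head is a cut, and lambda perturbed by the indicator of U gives
   a cocharacter mu > lambda with chi in F_r(mu), contradicting interiority. *)

lemma symmetric_quiver_reversal:
  assumes "finite E" and "symmetric_quiver I E s t" and "\<forall>a\<in>E. s a \<in> I \<and> t a \<in> I"
  shows "\<exists>\<phi>. bij_betw \<phi> E E \<and> (\<forall>a\<in>E. s (\<phi> a) = t a \<and> t (\<phi> a) = s a)"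
proof -
  define A where "A i j = {a\<in>E. s a = i \<and> t a = j}" for i j
  have "\<exists>f. bij_betw f (A i j) (A j i)" if "i \<in> I" "j \<in> I" for i j
    using assms(1,2) that finite_same_card_bij[of "A i j" "A j i"]
    unfolding symmetric_quiver_def A_def by auto
  then obtain F where F: "\<And>i j. i \<in> I \<Longrightarrow> j \<in> I \<Longrightarrow> bij_betw (F i j) (A i j) (A j i)"
    by metis
  define \<phi> where "\<phi> a = F (s a) (t a) a" for a
  have \<phi>_rev: "\<phi> a \<in> A (t a) (s a)" if "a \<in> E" for a
    using F[of "s a" "t a"] assms(3) that unfolding \<phi>_def bij_betw_def by (auto simp: A_def)
  have "inj_on \<phi> E"
  proof (rule inj_onI)
    fix a a' assume a: "a \<in> E" "a' \<in> E" "\<phi> a = \<phi> a'"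
    then have "s a = s a'" "t a = t a'"
      using \<phi>_rev[of a] \<phi>_rev[of a'] by (auto simp: A_def)
    with a F[of "s a" "t a"] assms(3) show "a = a'"
      unfolding \<phi>_def bij_betw_def inj_on_def by (auto simp: A_def)
  qed
  moreover have "\<phi> ` E \<subseteq> E"
    using \<phi>_rev by (auto simp: A_def)
  ultimately have "bij_betw \<phi> E E"
    using endo_inj_surj[OF assms(1)] by (simp add: bij_betw_def)
  with \<phi>_rev show ?thesis
    by (auto simp: A_def)
qed

lemma eventually_perturbation_in_interval:
  fixes a b x \<delta> :: real
  assumes "a \<le> x" "x \<le> b" "x = a \<Longrightarrow> 0 \<le> \<delta>" "x = b \<Longrightarrow> \<delta> \<le> 0"
  shows "\<forall>\<^sub>F \<epsilon> in at_right 0. a \<le> x + \<epsilon> * \<delta> \<and> x + \<epsilon> * \<delta> \<le> b \<and> (a < x \<longrightarrow> a < x + \<epsilon> * \<delta>)"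
proof -
  have pos: "\<forall>\<^sub>F \<epsilon> in at_right 0. (0::real) < \<epsilon>"
    by (rule eventually_at_right_less)
  have lim: "((\<lambda>\<epsilon>. x + \<epsilon> * \<delta>) \<longlongrightarrow> x) (at_right 0)"
    by (rule tendsto_eq_intros) (auto intro: tendsto_eq_intros)
  have lower: "\<forall>\<^sub>F \<epsilon> in at_right 0. a \<le> x + \<epsilon> * \<delta> \<and> (a < x \<longrightarrow> a < x + \<epsilon> * \<delta>)"
  proof (cases "a < x")
    case True
    show ?thesis
      using order_tendstoD(1)[OF lim True] by eventually_elim (use True in auto)
  next
    case False
    with assms(1,3) have "x = a" "0 \<le> \<delta>"
      by auto
    from pos show ?thesis
      by eventually_elim (use \<open>x = a\<close> \<open>0 \<le> \<delta>\<close> in auto)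
  qed
  have upper: "\<forall>\<^sub>F \<epsilon> in at_right 0. x + \<epsilon> * \<delta> \<le> b"
  proof (cases "x < b")
    case True
    show ?thesis
      using order_tendstoD(2)[OF lim True] by eventually_elim auto
  next
    case False
    with assms(2,4) have "x = b" "\<delta> \<le> 0"
      by auto
    from pos show ?thesis
      by eventually_elim (use \<open>x = b\<close> \<open>\<delta> \<le> 0\<close> in \<open>auto simp: mult_nonneg_nonpos\<close>)
  qed
  show ?thesis
    using lower upper by eventually_elim auto
qed

lemma small_perturbation_in_box:
  fixes x \<delta> :: "'a \<Rightarrow> real"
  assumes "finite A" and "\<forall>u\<in>A. a \<le> x u \<and> x u \<le> b"
    and "\<forall>u\<in>A. x u = a \<longrightarrow> 0 \<le> \<delta> u" and "\<forall>u\<in>A. x u = b \<longrightarrow> \<delta> u \<le> 0"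
  shows "\<exists>\<epsilon>>0. \<forall>u\<in>A. a \<le> x u + \<epsilon> * \<delta> u \<and> x u + \<epsilon> * \<delta> u \<le> b
                     \<and> (a < x u \<longrightarrow> a < x u + \<epsilon> * \<delta> u)"
proof -
  have "\<forall>\<^sub>F \<epsilon> in at_right 0. \<forall>u\<in>A. a \<le> x u + \<epsilon> * \<delta> u \<and> x u + \<epsilon> * \<delta> u \<le> b
                                 \<and> (a < x u \<longrightarrow> a < x u + \<epsilon> * \<delta> u)"
    using assms by (intro eventually_ball_finite ballI eventually_perturbation_in_interval) auto
  then have "\<forall>\<^sub>F \<epsilon> in at_right 0. 0 < \<epsilon> \<and> (\<forall>u\<in>A. a \<le> x u + \<epsilon> * \<delta> u \<and> x u + \<epsilon> * \<delta> u \<le> b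
                                 \<and> (a < x u \<longrightarrow> a < x u + \<epsilon> * \<delta> u))"
    using eventually_at_right_less eventually_conj by blast
  then show ?thesis
    using eventually_happens'[OF trivial_limit_at_right_real] by blast
qed

locale quiver_weights =
  fixes I :: "'v set" and E :: "'e set" and s t :: "'e \<Rightarrow> 'v" and d :: "'v \<Rightarrow> nat"
  assumes finite_I: "finite I" and finite_E: "finite E"
    and arrows_in_I: "\<forall>a\<in>E. s a \<in> I \<and> t a \<in> I"
begin

abbreviation W where "W \<equiv> Widx E s t d"
abbreviation B where "B \<equiv> Bidx I d"
abbreviation pair_wt where "pair_wt lam w \<equiv> pairing I d lam (wt s t w)"

definition head :: "'e \<times> nat \<times> nat \<Rightarrow> 'v \<times> nat" where
  "head w = (case w of (a, x, y) \<Rightarrow> (t a, y))"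

definition tail :: "'e \<times> nat \<times> nat \<Rightarrow> 'v \<times> nat" where
  "tail w = (case w of (a, x, y) \<Rightarrow> (s a, x))"

lemma Bidx_eq_Sigma: "B = Sigma I (\<lambda>i. {1..d i})"
  by (auto simp: Bidx_def)

lemma finite_B: "finite B"
  using finite_I by (simp add: Bidx_eq_Sigma)

lemma finite_W: "finite W"
proof -
  have "W = Sigma E (\<lambda>a. {1..d (s a)} \<times> {1..d (t a)})"
    by (auto simp: Widx_def)
  then show ?thesis
    using finite_E by simp
qed

lemma head_in_B: "w \<in> W \<Longrightarrow> head w \<in> B"
  and tail_in_B: "w \<in> W \<Longrightarrow> tail w \<in> B"
  using arrows_in_I by (auto simp: Widx_def Bidx_def head_def tail_def)

lemma wt_eq_of_bool: "wt s t w = (\<lambda>b. of_bool (b = head w) - of_bool (b = tail w))"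
  by (cases w) (auto simp: wt_def head_def tail_def)

definition wsum :: "('e \<times> nat \<times> nat \<Rightarrow> real) \<Rightarrow> 'v \<times> nat \<Rightarrow> real" where
  "wsum g = (\<lambda>b. \<Sum>w\<in>W. g w * wt s t w b)"

definition wcomb :: "('e \<times> nat \<times> nat \<Rightarrow> real) \<Rightarrow> real \<Rightarrow> 'v \<times> nat \<Rightarrow> real" where
  "wcomb g c = (\<lambda>b. wsum g b + c * tau I d b)"

lemma wsum_add: "wsum (\<lambda>w. f w + g w) = (\<lambda>b. wsum f b + wsum g b)"
  by (simp add: wsum_def distrib_right sum.distrib)

lemma wsum_diff: "wsum (\<lambda>w. f w - g w) = (\<lambda>b. wsum f b - wsum g b)"
  by (simp add: wsum_def left_diff_distrib sum_subtractf)

lemma wsum_mult: "wsum (\<lambda>w. a * g w) = (\<lambda>b. a * wsum g b)"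
  by (simp add: wsum_def sum_distrib_left mult.assoc)

lemma wsum_point: "w \<in> W \<Longrightarrow> wsum (\<lambda>u. of_bool (u = w)) = wt s t w"
  using finite_W by (simp add: wsum_def)

lemma pairing_wt:
  "w \<in> W \<Longrightarrow> pair_wt \<rho> w = of_int (\<rho> (head w) - \<rho> (tail w))"
  using finite_B head_in_B[of w] tail_in_B[of w]
  by (simp add: pairing_def wt_eq_of_bool right_diff_distrib sum_subtractf)

lemma pairing_wsum: "pairing I d \<rho> (wsum g) = (\<Sum>w\<in>W. g w * pair_wt \<rho> w)"
  by (simp add: pairing_def wsum_def sum_distrib_left sum_distrib_right mult_ac sum.swap[of _ B])

lemma pairing_tau: "cochar I d \<rho> \<Longrightarrow> pairing I d \<rho> (tau I d) = 0"
  by (simp add: pairing_def tau_def cochar_def sum_divide_distrib[symmetric] of_int_sum[symmetric])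

lemma pairing_wcomb:
  assumes "cochar I d \<rho>"
  shows "pairing I d \<rho> (wcomb g c) = (\<Sum>w\<in>W. g w * pair_wt \<rho> w)"
proof -
  have "pairing I d \<rho> (wcomb g c) = pairing I d \<rho> (wsum g) + c * pairing I d \<rho> (tau I d)"
    by (simp add: pairing_def wcomb_def distrib_left sum.distrib sum_distrib_left mult_ac)
  then show ?thesis
    using assms by (simp add: pairing_wsum pairing_tau)
qed

lemma Npos_eq_wsum: "Npos I E s t d lam = wsum (\<lambda>w. of_bool (0 < pair_wt lam w))"
  using finite_W by (simp add: Npos_def wsum_def Int_def)

lemma wcomb_mem_Hr_iff:
  assumes "cochar I d lam" and bounds: "\<forall>w\<in>W. -r \<le> g w \<and> g w \<le> 0"
  shows "wcomb g c \<in> Hr I E s t d r lam \<longleftrightarrow>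
    (\<forall>w\<in>W. (0 < pair_wt lam w \<longrightarrow> g w = -r) \<and> (pair_wt lam w < 0 \<longrightarrow> g w = 0))"
proof -
  define h where "h w = (if 0 < pair_wt lam w then (g w + r) * pair_wt lam w else g w * pair_wt lam w)"
    for w
  have "pairing I d lam (wcomb g c) + r * pairing I d lam (Npos I E s t d lam)
      = (\<Sum>w\<in>W. g w * pair_wt lam w + r * (of_bool (0 < pair_wt lam w) * pair_wt lam w))"
    using assms(1) by (simp add: pairing_wcomb Npos_eq_wsum pairing_wsum sum_distrib_left sum.distrib)
  also have "\<dots> = (\<Sum>w\<in>W. h w)"
    by (rule sum.cong) (auto simp: h_def algebra_simps)
  moreover have "\<forall>w\<in>W. 0 \<le> h w"
    using bounds by (auto simp: h_def mult_nonpos_nonpos)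
  moreover have "h w = 0 \<longleftrightarrow> (0 < pair_wt lam w \<longrightarrow> g w = -r) \<and> (pair_wt lam w < 0 \<longrightarrow> g w = 0)"
    for w
    by (auto simp: h_def)
  ultimately show ?thesis
    by (simp add: Hr_def sum_nonneg_eq_0_iff[OF finite_W])
qed

definition sign_adapted :: "real \<Rightarrow> real set \<Rightarrow> ('v \<times> nat \<Rightarrow> int) \<Rightarrow> ('e \<times> nat \<times> nat \<Rightarrow> real) \<Rightarrow> bool"
  where "sign_adapted r Z lam g \<longleftrightarrow>
    (\<forall>w\<in>W. (pair_wt lam w < 0 \<longrightarrow> g w = 0) \<and> (0 < pair_wt lam w \<longrightarrow> g w = -r)
           \<and> (pair_wt lam w = 0 \<longrightarrow> g w \<in> Z))"

lemma decomp_iff: "decomp I E s t d r Z lam \<chi> \<longleftrightarrow> (\<exists>g c. sign_adapted r Z lam g \<and> \<chi> = wcomb g c)"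
  unfolding decomp_def sign_adapted_def wcomb_def wsum_def by blast

lemma sign_adapted_bounds:
  "0 \<le> r \<Longrightarrow> sign_adapted r {-r..0} lam g \<Longrightarrow> \<forall>w\<in>W. -r \<le> g w \<and> g w \<le> 0"
proof
  fix w assume "0 \<le> r" "sign_adapted r {-r..0} lam g" "w \<in> W"
  then show "-r \<le> g w \<and> g w \<le> 0"
    unfolding sign_adapted_def by (cases "pair_wt lam w" "0::real" rule: linorder_cases) auto
qed

lemma sign_adapted_imp_wcomb_mem_Hr:
  assumes "cochar I d lam" "0 \<le> r" "sign_adapted r {-r..0} lam g"
  shows "wcomb g c \<in> Hr I E s t d r lam"
  using assms(3) wcomb_mem_Hr_iff[OF assms(1) sign_adapted_bounds[OF assms(2,3)]]
  by (simp add: sign_adapted_def)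

definition tight :: "real \<Rightarrow> ('v \<times> nat \<Rightarrow> int) \<Rightarrow> ('e \<times> nat \<times> nat \<Rightarrow> real) \<Rightarrow> ('e \<times> nat \<times> nat) set"
  where "tight r lam g = {w\<in>W. pair_wt lam w = 0 \<and> g w = -r}"

(* A lambda-neutral weight can be traversed from head to tail while its coefficient can still
   decrease, and from tail to head while it can still increase. *)
definition residual :: "real \<Rightarrow> ('v \<times> nat \<Rightarrow> int) \<Rightarrow> ('e \<times> nat \<times> nat \<Rightarrow> real) \<Rightarrow> ('v \<times> nat) rel"
  where "residual r lam g =
    {(head w, tail w) | w. w \<in> W \<and> pair_wt lam w = 0 \<and> -r < g w} \<union>
    {(tail w, head w) | w. w \<in> W \<and> pair_wt lam w = 0 \<and> g w < 0}"

definition feasible_direction ::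
  "real \<Rightarrow> ('v \<times> nat \<Rightarrow> int) \<Rightarrow> ('e \<times> nat \<times> nat \<Rightarrow> real) \<Rightarrow> ('e \<times> nat \<times> nat \<Rightarrow> real) \<Rightarrow> bool"
  where "feasible_direction r lam g \<delta> \<longleftrightarrow>
    (\<forall>w\<in>W. (pair_wt lam w \<noteq> 0 \<longrightarrow> \<delta> w = 0) \<and> (g w = -r \<longrightarrow> 0 \<le> \<delta> w) \<and> (g w = 0 \<longrightarrow> \<delta> w \<le> 0))"

lemma residual_path_flow:
  assumes "(x, y) \<in> (residual r lam g)\<^sup>*"
  shows "\<exists>\<delta>. feasible_direction r lam g \<delta> \<and> wsum \<delta> = (\<lambda>b. of_bool (b = y) - of_bool (b = x))"
  using assms
proof (induction rule: rtrancl_induct)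
  case base
  show ?case
    by (rule exI[of _ "\<lambda>_. 0"]) (simp add: feasible_direction_def wsum_def)
next
  case (step y z)
  from step.IH obtain \<delta> where feasible: "feasible_direction r lam g \<delta>"
    and flow: "wsum \<delta> = (\<lambda>b. of_bool (b = y) - of_bool (b = x))"
    by blast
  from step.hyps(2) consider
      (forward) w where "w \<in> W" "pair_wt lam w = 0" "-r < g w" "y = head w" "z = tail w"
    | (backward) w where "w \<in> W" "pair_wt lam w = 0" "g w < 0" "y = tail w" "z = head w"
    unfolding residual_def by blast
  then show ?case
  proof cases
    case forward
    let ?\<delta> = "\<lambda>u. \<delta> u - of_bool (u = w)"
    have "feasible_direction r lam g ?\<delta>"
      using feasible forward by (auto simp: feasible_direction_def)
    moreover have "wsum ?\<delta> = (\<lambda>b. of_bool (b = z) - of_bool (b = x))"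
      using forward by (simp add: wsum_diff wsum_point flow wt_eq_of_bool)
    ultimately show ?thesis
      by blast
  next
    case backward
    let ?\<delta> = "\<lambda>u. \<delta> u + of_bool (u = w)"
    have "feasible_direction r lam g ?\<delta>"
      using feasible backward by (auto simp: feasible_direction_def)
    moreover have "wsum ?\<delta> = (\<lambda>b. of_bool (b = z) - of_bool (b = x))"
      using backward by (simp add: wsum_add wsum_point flow wt_eq_of_bool)
    ultimately show ?thesis
      by blast
  qed
qed

lemma residual_cycle_shrinks_tight:
  assumes "0 < r" and adapted: "sign_adapted r {-r..0} lam g" and w0: "w0 \<in> tight r lam g"
    and cycle: "(head w0, tail w0) \<in> (residual r lam g)\<^sup>*"
  shows "\<exists>g'. sign_adapted r {-r..0} lam g' \<and> wsum g' = wsum g \<and> tight r lam g' \<subset> tight r lam g"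
proof -
  have w0W: "w0 \<in> W" "pair_wt lam w0 = 0" "g w0 = -r"
    using w0 by (auto simp: tight_def)
  obtain \<delta> where feasible: "feasible_direction r lam g \<delta>"
    and flow: "wsum \<delta> = (\<lambda>b. of_bool (b = tail w0) - of_bool (b = head w0))"
    using residual_path_flow[OF cycle] by blast
  define \<gamma> where "\<gamma> = (\<lambda>u. \<delta> u + of_bool (u = w0))"
  have circulation: "wsum \<gamma> = (\<lambda>_. 0)"
    using w0W(1) by (simp add: \<gamma>_def wsum_add wsum_point flow wt_eq_of_bool)
  have "0 \<le> \<delta> w0"
    using feasible w0W by (simp add: feasible_direction_def)
  then have \<gamma>_w0: "0 < \<gamma> w0"
    by (simp add: \<gamma>_def)
  have \<gamma>_feasible: "feasible_direction r lam g \<gamma>"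
    using feasible w0W \<open>0 < r\<close> \<open>0 \<le> \<delta> w0\<close> by (auto simp: feasible_direction_def \<gamma>_def)
  have bounds: "\<forall>u\<in>W. -r \<le> g u \<and> g u \<le> 0"
    using sign_adapted_bounds[OF _ adapted] \<open>0 < r\<close> by simp
  obtain \<epsilon> where "0 < \<epsilon>" and \<epsilon>: "\<forall>u\<in>W. -r \<le> g u + \<epsilon> * \<gamma> u \<and> g u + \<epsilon> * \<gamma> u \<le> 0
                                         \<and> (-r < g u \<longrightarrow> -r < g u + \<epsilon> * \<gamma> u)"
    using small_perturbation_in_box[OF finite_W bounds] \<gamma>_feasible
    unfolding feasible_direction_def by blast
  define g' where "g' = (\<lambda>u. g u + \<epsilon> * \<gamma> u)"
  have "wsum g' = wsum g"
    by (simp add: g'_def wsum_add wsum_mult circulation)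
  moreover have "sign_adapted r {-r..0} lam g'"
    using adapted \<gamma>_feasible \<epsilon> by (auto simp: sign_adapted_def feasible_direction_def g'_def)
  moreover have "tight r lam g' \<subseteq> tight r lam g - {w0}"
  proof
    fix w assume w: "w \<in> tight r lam g'"
    then have "g w = -r"
      using \<epsilon> bounds by (force simp: tight_def g'_def)
    moreover have "w \<noteq> w0"
      using w w0W \<open>0 < \<epsilon>\<close> \<gamma>_w0 by (auto simp: tight_def g'_def)
    ultimately show "w \<in> tight r lam g - {w0}"
      using w by (simp add: tight_def)
  qed
  ultimately show ?thesis
    using w0 by blast
qed

(* Projection of an integral coweight to SG(d), scaled by card B to stay integral. *)
definition centered :: "('v \<times> nat \<Rightarrow> int) \<Rightarrow> 'v \<times> nat \<Rightarrow> int" where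
  "centered \<nu> b = (if b \<in> B then int (card B) * \<nu> b - (\<Sum>x\<in>B. \<nu> x) else 0)"

lemma cochar_centered: "cochar I d (centered \<nu>)"
proof -
  have "(\<Sum>b\<in>B. centered \<nu> b) = (\<Sum>b\<in>B. int (card B) * \<nu> b - (\<Sum>x\<in>B. \<nu> x))"
    by (simp add: centered_def)
  also have "\<dots> = 0"
    by (simp add: sum_subtractf sum_distrib_left[symmetric])
  finally show ?thesis
    by (simp add: cochar_def centered_def)
qed

lemma pairing_centered_wt:
  "w \<in> W \<Longrightarrow> pair_wt (centered \<nu>) w = of_int (int (card B) * (\<nu> (head w) - \<nu> (tail w)))"
  by (simp add: pairing_wt centered_def head_in_B tail_in_B algebra_simps)

lemma residual_cut_gives_larger_cochar:
  assumes adapted: "sign_adapted r {-r..0} lam g"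
    and w0: "w0 \<in> W" "pair_wt lam w0 = 0" and cut: "(head w0, tail w0) \<notin> (residual r lam g)\<^sup>*"
  shows "\<exists>mu. cochar I d mu \<and> cgt I E s t d mu lam \<and> sign_adapted r {-r..0} mu g"
proof -
  define U where "U = {v. (head w0, v) \<in> (residual r lam g)\<^sup>*}"
  have U_closed: "y \<in> U" if "(x, y) \<in> residual r lam g" "x \<in> U" for x y
    using that by (auto simp: U_def)
  \<comment> \<open>The factor 2 preserves the sign on lambda-nonneutral weights, as their pairing with lambda
    is a nonzero integer.\<close>
  define mu where "mu = centered (\<lambda>b. 2 * lam b + of_bool (b \<in> U))"
  have "0 < card B"
    using head_in_B[OF w0(1)] finite_B card_gt_0_iff by blast
  have pos: "0 < pair_wt mu w \<longleftrightarrow> 0 < pair_wt lam w \<or> (pair_wt lam w = 0 \<and> head w \<in> U \<and> tail w \<notin> U)"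
    and neg: "pair_wt mu w < 0 \<longleftrightarrow> pair_wt lam w < 0 \<or> (pair_wt lam w = 0 \<and> tail w \<in> U \<and> head w \<notin> U)"
    if "w \<in> W" for w
  proof -
    have "pair_wt mu w = of_int (int (card B) * (2 * (lam (head w) - lam (tail w))
                                 + (of_bool (head w \<in> U) - of_bool (tail w \<in> U))))"
      using that by (simp add: mu_def pairing_centered_wt algebra_simps)
    moreover have "pair_wt lam w = of_int (lam (head w) - lam (tail w))"
      using pairing_wt that .
    ultimately show "0 < pair_wt mu w \<longleftrightarrow> 0 < pair_wt lam w \<or> (pair_wt lam w = 0 \<and> head w \<in> U \<and> tail w \<notin> U)"
      and "pair_wt mu w < 0 \<longleftrightarrow> pair_wt lam w < 0 \<or> (pair_wt lam w = 0 \<and> tail w \<in> U \<and> head w \<notin> U)"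
      using \<open>0 < card B\<close>
      by (cases "head w \<in> U"; cases "tail w \<in> U"; auto simp: zero_less_mult_iff mult_less_0_iff)+
  qed
  have "cgeq I E s t d mu lam"
    using pos by (auto simp: cgeq_def)
  moreover have "\<not> cgeq I E s t d lam mu"
    using w0 pos[OF w0(1)] cut by (auto simp: cgeq_def U_def)
  moreover have "sign_adapted r {-r..0} mu g"
    unfolding sign_adapted_def
  proof (intro ballI conjI impI)
    fix w assume w: "w \<in> W"
    have lam_adapted: "(pair_wt lam w < 0 \<longrightarrow> g w = 0) \<and> (0 < pair_wt lam w \<longrightarrow> g w = -r)
        \<and> (pair_wt lam w = 0 \<longrightarrow> -r \<le> g w \<and> g w \<le> 0)"
      using adapted w by (simp add: sign_adapted_def)
    show "g w = -r" if "0 < pair_wt mu w"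
    proof (rule ccontr)
      assume "g w \<noteq> -r"
      with that pos[OF w] lam_adapted have "pair_wt lam w = 0" "-r < g w" "head w \<in> U" "tail w \<notin> U"
        by auto
      with w U_closed show False
        unfolding residual_def by blast
    qed
    show "g w = 0" if "pair_wt mu w < 0"
    proof (rule ccontr)
      assume "g w \<noteq> 0"
      with that neg[OF w] lam_adapted have "pair_wt lam w = 0" "g w < 0" "tail w \<in> U" "head w \<notin> U"
        by auto
      with w U_closed show False
        unfolding residual_def by blast
    qed
    show "g w \<in> {-r..0}" if "pair_wt mu w = 0"
      using that pos[OF w] neg[OF w] lam_adapted by auto
  qed
  ultimately show ?thesis
    using cochar_centered mu_def by (auto simp: cgt_def)
qed

end

locale symmetric_quiver_weights = quiver_weights +
  assumes symmetric: "symmetric_quiver I E s t"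
begin

lemma weight_reversal: "\<exists>\<sigma>. bij_betw \<sigma> W W \<and> (\<forall>w\<in>W. wt s t (\<sigma> w) = (\<lambda>b. - wt s t w b))"
proof -
  obtain \<phi> where \<phi>: "bij_betw \<phi> E E" "\<forall>a\<in>E. s (\<phi> a) = t a \<and> t (\<phi> a) = s a"
    using symmetric_quiver_reversal[OF finite_E symmetric arrows_in_I] by blast
  define \<sigma> where "\<sigma> w = (case w of (a, x, y) \<Rightarrow> (\<phi> a, y, x))" for w :: "_ \<times> nat \<times> nat"
  have "\<sigma> ` W \<subseteq> W"
    using \<phi> by (auto simp: \<sigma>_def Widx_def bij_betw_def)
  moreover have "inj_on \<sigma> W"
    using \<phi>(1) by (auto simp: inj_on_def \<sigma>_def Widx_def bij_betw_def)
  ultimately have "bij_betw \<sigma> W W"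
    using endo_inj_surj[OF finite_W] by (simp add: bij_betw_def)
  moreover have "\<forall>w\<in>W. wt s t (\<sigma> w) = (\<lambda>b. - wt s t w b)"
    using \<phi>(2) by (auto simp: \<sigma>_def Widx_def wt_def)
  ultimately show ?thesis
    by blast
qed

lemma mem_rW_iff:
  "\<psi> \<in> rW I E s t d r \<longleftrightarrow> (\<exists>g c. (\<forall>w\<in>W. -r \<le> g w \<and> g w \<le> 0) \<and> \<psi> = wcomb g c)"
proof -
  obtain \<sigma> where \<sigma>: "bij_betw \<sigma> W W" "\<forall>w\<in>W. wt s t (\<sigma> w) = (\<lambda>b. - wt s t w b)"
    using weight_reversal by blast
  have reverse: "wsum f = wsum (\<lambda>w. - f (\<sigma> w))" for f
  proof -
    have "wsum f = (\<lambda>b. \<Sum>w\<in>W. f (\<sigma> w) * wt s t (\<sigma> w) b)"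
      unfolding wsum_def by (intro ext) (rule sum.reindex_bij_betw[OF \<sigma>(1), symmetric])
    also have "\<dots> = wsum (\<lambda>w. - f (\<sigma> w))"
      unfolding wsum_def using \<sigma>(2) by (intro ext sum.cong) auto
    finally show ?thesis .
  qed
  have \<sigma>_W: "\<sigma> w \<in> W" if "w \<in> W" for w
    using \<sigma>(1) that bij_betwE by blast
  have rW: "rW I E s t d r = {wcomb f c | f c. \<forall>w\<in>W. 0 \<le> f w \<and> f w \<le> r}"
    by (auto simp: rW_def wcomb_def wsum_def)
  show ?thesis
  proof
    assume "\<psi> \<in> rW I E s t d r"
    then obtain f c where "\<forall>w\<in>W. 0 \<le> f w \<and> f w \<le> r" "\<psi> = wcomb f c"
      by (auto simp: rW)
    then show "\<exists>g c. (\<forall>w\<in>W. -r \<le> g w \<and> g w \<le> 0) \<and> \<psi> = wcomb g c"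
      using \<sigma>_W by (intro exI[of _ "\<lambda>w. - f (\<sigma> w)"] exI[of _ c]) (auto simp: wcomb_def reverse[of f])
  next
    assume "\<exists>g c. (\<forall>w\<in>W. -r \<le> g w \<and> g w \<le> 0) \<and> \<psi> = wcomb g c"
    then obtain g c where "\<forall>w\<in>W. -r \<le> g w \<and> g w \<le> 0" "\<psi> = wcomb g c"
      by blast
    moreover from this(1) have "\<forall>w\<in>W. 0 \<le> - g (\<sigma> w) \<and> - g (\<sigma> w) \<le> r"
      using \<sigma>_W by fastforce
    ultimately show "\<psi> \<in> rW I E s t d r"
      unfolding rW by (auto simp: wcomb_def reverse[of g])
  qed
qed

lemma mem_Fr_imp_decomp:
  assumes "cochar I d lam" and "\<chi> \<in> Fr I E s t d r lam"
  shows "decomp I E s t d r {-r..0} lam \<chi>"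
proof -
  obtain g c where bounds: "\<forall>w\<in>W. -r \<le> g w \<and> g w \<le> 0" and \<chi>: "\<chi> = wcomb g c"
    using assms(2) by (auto simp: Fr_def mem_rW_iff)
  then have "\<forall>w\<in>W. (0 < pair_wt lam w \<longrightarrow> g w = -r) \<and> (pair_wt lam w < 0 \<longrightarrow> g w = 0)"
    using assms wcomb_mem_Hr_iff[OF assms(1) bounds] by (simp add: Fr_def)
  with bounds have "sign_adapted r {-r..0} lam g"
    by (simp add: sign_adapted_def)
  with \<chi> show ?thesis
    by (auto simp: decomp_iff)
qed

lemma decomp_imp_mem_Fr:
  assumes "cochar I d lam" and "0 \<le> r" and "decomp I E s t d r {-r..0} lam \<chi>"
  shows "\<chi> \<in> Fr I E s t d r lam"
proof -
  obtain g c where adapted: "sign_adapted r {-r..0} lam g" and \<chi>: "\<chi> = wcomb g c"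
    using assms(3) by (auto simp: decomp_iff)
  have "\<chi> \<in> rW I E s t d r"
    using sign_adapted_bounds[OF assms(2) adapted] \<chi> by (auto simp: mem_rW_iff)
  moreover have "\<chi> \<in> Hr I E s t d r lam"
    using sign_adapted_imp_wcomb_mem_Hr[OF assms(1,2) adapted] \<chi> by simp
  ultimately show ?thesis
    by (simp add: Fr_def)
qed

lemma Fr_subset_imp_cgeq:
  assumes "0 < r" and "cochar I d lam" and "cochar I d mu"
    and subset: "Fr I E s t d r mu \<subseteq> Fr I E s t d r lam"
  shows "cgeq I E s t d mu lam"
proof -
  define g where "g w = (if 0 < pair_wt mu w then -r else if pair_wt mu w < 0 then 0 else -r / 2)" for w
  have bounds: "\<forall>w\<in>W. -r \<le> g w \<and> g w \<le> 0"
    using \<open>0 < r\<close> by (simp add: g_def)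
  have "sign_adapted r {-r..0} mu g"
    using \<open>0 < r\<close> by (simp add: sign_adapted_def g_def)
  then have "decomp I E s t d r {-r..0} mu (wcomb g 0)"
    by (auto simp: decomp_iff)
  then have "wcomb g 0 \<in> Fr I E s t d r mu"
    using decomp_imp_mem_Fr[OF assms(3)] \<open>0 < r\<close> by simp
  with subset have "wcomb g 0 \<in> Hr I E s t d r lam"
    by (auto simp: Fr_def)
  then have "\<forall>w\<in>W. 0 < pair_wt lam w \<longrightarrow> g w = -r"
    using wcomb_mem_Hr_iff[OF assms(2) bounds] by blast
  then show ?thesis
    using \<open>0 < r\<close> by (auto simp: cgeq_def g_def split: if_splits)
qed

lemma tight_empty_if_card_minimal:
  assumes "0 < r" and Fint: "\<chi> \<in> Fint I E s t d r lam"
    and adapted: "sign_adapted r {-r..0} lam g" and \<chi>: "\<chi> = wcomb g c"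
    and minimal: "\<And>g'. sign_adapted r {-r..0} lam g' \<Longrightarrow> \<chi> = wcomb g' c
                        \<Longrightarrow> card (tight r lam g) \<le> card (tight r lam g')"
  shows "tight r lam g = {}"
proof (rule ccontr)
  assume "tight r lam g \<noteq> {}"
  then obtain w0 where w0: "w0 \<in> tight r lam g"
    by blast
  show False
  proof (cases "(head w0, tail w0) \<in> (residual r lam g)\<^sup>*")
    case True
    then obtain g' where adapted': "sign_adapted r {-r..0} lam g'" and "wsum g' = wsum g"
      and shrinks: "tight r lam g' \<subset> tight r lam g"
      using residual_cycle_shrinks_tight[OF \<open>0 < r\<close> adapted w0] by blast
    then have "\<chi> = wcomb g' c"
      using \<chi> by (simp add: wcomb_def)
    moreover have "card (tight r lam g') < card (tight r lam g)"
      using psubset_card_mono[OF _ shrinks] finite_W by (simp add: tight_def)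
    ultimately show False
      using minimal[OF adapted'] by simp
  next
    case False
    then obtain mu where "cochar I d mu" "cgt I E s t d mu lam" "sign_adapted r {-r..0} mu g"
      using residual_cut_gives_larger_cochar[OF adapted] w0 unfolding tight_def by blast
    then have "decomp I E s t d r {-r..0} mu \<chi>"
      using \<chi> by (auto simp: decomp_iff)
    then have "\<chi> \<in> Fr I E s t d r mu"
      using decomp_imp_mem_Fr \<open>cochar I d mu\<close> \<open>0 < r\<close> by simp
    with Fint \<open>cochar I d mu\<close> \<open>cgt I E s t d mu lam\<close> show False
      by (auto simp: Fint_def)
  qed
qed

lemma mem_Fint_imp_decomp:
  assumes "0 < r" and "cochar I d lam" and Fint: "\<chi> \<in> Fint I E s t d r lam"
  shows "decomp I E s t d r {-r<..0} lam \<chi>"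
proof -
  have "decomp I E s t d r {-r..0} lam \<chi>"
    using mem_Fr_imp_decomp[OF assms(2)] Fint by (simp add: Fint_def)
  then obtain g0 c where "sign_adapted r {-r..0} lam g0" "\<chi> = wcomb g0 c"
    by (auto simp: decomp_iff)
  then obtain g where adapted: "sign_adapted r {-r..0} lam g" and \<chi>: "\<chi> = wcomb g c"
    and "\<And>g'. sign_adapted r {-r..0} lam g' \<Longrightarrow> \<chi> = wcomb g' c
                \<Longrightarrow> card (tight r lam g) \<le> card (tight r lam g')"
    using ex_has_least_nat[where P = "\<lambda>g. sign_adapted r {-r..0} lam g \<and> \<chi> = wcomb g c"
        and m = "\<lambda>g. card (tight r lam g)"] by blast
  then have no_tight: "tight r lam g = {}"
    using tight_empty_if_card_minimal[OF \<open>0 < r\<close> Fint] by blast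
  have "sign_adapted r {-r<..0} lam g"
    unfolding sign_adapted_def
  proof
    fix w assume "w \<in> W"
    with adapted no_tight show "(pair_wt lam w < 0 \<longrightarrow> g w = 0)
        \<and> (0 < pair_wt lam w \<longrightarrow> g w = -r) \<and> (pair_wt lam w = 0 \<longrightarrow> g w \<in> {-r<..0})"
      unfolding sign_adapted_def tight_def by fastforce
  qed
  with \<chi> show ?thesis
    by (auto simp: decomp_iff)
qed

end

theorem proposition3p2:
  fixes I :: "'v set" and E :: "'e set" and s t :: "'e \<Rightarrow> 'v" and d :: "'v \<Rightarrow> nat"
  assumes "finite I" and "finite E" and "\<forall>a\<in>E. s a \<in> I \<and> t a \<in> I"
    and "symmetric_quiver I E s t"
    and "standing_assumption I E s t d"
  shows
    "(\<forall>r \<chi> lam. \<chi> \<in> MR I d \<and> rfun I E s t d \<chi> = r \<and> cochar I d lam \<and> \<chi> \<in> Fr I E s t d r lam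
        \<longrightarrow> decomp I E s t d r {-r..0} lam \<chi>)
   \<and> (\<forall>r \<chi> lam. 0 \<le> r \<and> cochar I d lam \<and> \<chi> \<in> rW I E s t d r \<and> decomp I E s t d r {-r..0} lam \<chi>
        \<longrightarrow> \<chi> \<in> Fr I E s t d r lam)
   \<and> (\<forall>r lam mu. 0 < r \<and> cochar I d lam \<and> cochar I d mu \<and> Fr I E s t d r mu \<subseteq> Fr I E s t d r lam
        \<longrightarrow> cgeq I E s t d mu lam)
   \<and> (\<forall>r \<chi> lam. 0 < r \<and> \<chi> \<in> MR I d \<and> rfun I E s t d \<chi> = r \<and> cochar I d lam \<and> \<chi> \<in> Fint I E s t d r lam
        \<longrightarrow> decomp I E s t d r {-r<..0} lam \<chi>)"
proof -
  interpret symmetric_quiver_weights I E s t d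
    using assms(1-4) by unfold_locales
  show ?thesis
    using mem_Fr_imp_decomp decomp_imp_mem_Fr Fr_subset_imp_cgeq mem_Fint_imp_decomp by blast
qed

end
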